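(* Let $W=\langle s,t: s^2=t^2=(st)^m=1\rangle$ be a Coxeter group of rank $2$ ($m\ge 2$ the order of $st$), and let $\pi_{\mathcal A}$ be the character of the permutation action of $W$ on its reflection arrangement $\mathcal A$. Then $W$ acts on the degree $1$ component of $A(W)$ with character $\pi_{\mathcal A}$, and on the degree $2$ (top) component $A_{\{0\}}$ of $A(W)$ with character $\Psi_S=\pi_{\mathcal A}-1_S$. Consequently $W$ acts on $A(W)$ with character $2\pi_{\mathcal A}$.
   Context: $W$ acts as a reflection group on $\mathbb R^2$, hence on $\mathbb C^2$. $T$ is the set of reflections of $W$, $H_t$ the reflecting hyperplane ($1$-eigenspace) of $t\in T$, and $\mathcal A=\{H_t:t\in T\}$, permuted by $W$. The Orlik–Solomon algebra $A(W)$ is the $\mathbb C$-algebra generated by $a_t$ ($t\in T$) subject to $a_ta_{t'}=-a_{t'}a_t$ and $\sum_{i=1}^p(-1)^ia_{t_1}\cdots\widehat{a_{t_i}}\cdots a_{t_p}=0$ whenever $\{H_{t_1},\dots,H_{t_p}\}$ is linearly dependent; $W$ acts by $a_t.w=a_{w^{-1}tw}$. It is graded, the degree $p$ component spanned by products $a_{t_1}\cdots a_{t_p}$ with $\dim(H_{t_1}\cap\dots\cap H_{t_p})=2-p$. $1_S$ is the trivial character. *)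

theory Defs
  imports "HOL-Analysis.Analysis"
begin

definition sref :: "real^2^2" where
  "sref = (\<chi> i j. if i = j then (if i = 1 then 1 else -1) else 0)"

text \<open>Simple reflection t: reflection in the line through 0 at angle pi/m,
  so that s t is a rotation of order m.\<close>
definition tref :: "nat \<Rightarrow> real^2^2" where
  "tref m = (\<chi> i j. if i = 1 \<and> j = 1 then cos (2 * pi / real m)
                    else if i = 2 \<and> j = 2 then - cos (2 * pi / real m)
                    else sin (2 * pi / real m))"

text \<open>W = the group generated by s and t (a finite group, so closure
  under right multiplication by the generators gives the whole group).\<close>
inductive_set dihedral :: "nat \<Rightarrow> (real^2^2) set" for m where
  one: "mat 1 \<in> dihedral m"
| mul_s: "w \<in> dihedral m \<Longrightarrow> w ** sref \<in> dihedral m"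
| mul_t: "w \<in> dihedral m \<Longrightarrow> w ** tref m \<in> dihedral m"

definition fixspace :: "real^2^2 \<Rightarrow> (real^2) set" where
  "fixspace w = {x. w *v x = x}"

definition is_reflection :: "real^2^2 \<Rightarrow> bool" where
  "is_reflection w \<longleftrightarrow> w ** w = mat 1 \<and> dim (fixspace w) = 1"

definition refls :: "nat \<Rightarrow> (real^2^2) set" where
  "refls m = {w \<in> dihedral m. is_reflection w}"

definition arrangement :: "nat \<Rightarrow> (real^2) set set" where
  "arrangement m = fixspace ` refls m"

definition permchar :: "nat \<Rightarrow> real^2^2 \<Rightarrow> complex" where
  "permchar m w = of_nat (card {H \<in> arrangement m. (\<lambda>x. w *v x) ` H = H})"

definition smult :: "complex \<Rightarrow> ('v \<Rightarrow> complex) \<Rightarrow> ('v \<Rightarrow> complex)" where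
  "smult c f = (\<lambda>x. c * f x)"

definition lincomb :: "(nat \<Rightarrow> complex) \<Rightarrow> ('v \<Rightarrow> complex) list \<Rightarrow> ('v \<Rightarrow> complex)" where
  "lincomb c bs = (\<lambda>x. \<Sum>j<length bs. c j * (bs ! j) x)"

definition cspan :: "('v \<Rightarrow> complex) set \<Rightarrow> ('v \<Rightarrow> complex) set" where
  "cspan S = {f. \<exists>vs c. set vs \<subseteq> S \<and> f = lincomb c vs}"

text \<open>bs is a list of vectors of U whose classes form a basis of U/K.\<close>
definition qbasis :: "('v \<Rightarrow> complex) set \<Rightarrow> ('v \<Rightarrow> complex) set
                      \<Rightarrow> ('v \<Rightarrow> complex) list \<Rightarrow> bool" where
  "qbasis U K bs \<longleftrightarrow> set bs \<subseteq> U \<and> U \<subseteq> cspan (K \<union> set bs) \<and>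
     (\<forall>c. lincomb c bs \<in> K \<longrightarrow> (\<forall>j<length bs. c j = 0))"

text \<open>Trace of the map induced by g on the quotient U/K, computed as the
  trace of its matrix with respect to a basis of U/K.\<close>
definition qtrace :: "('v \<Rightarrow> complex) set \<Rightarrow> ('v \<Rightarrow> complex) set
                      \<Rightarrow> (('v \<Rightarrow> complex) \<Rightarrow> ('v \<Rightarrow> complex)) \<Rightarrow> complex" where
  "qtrace U K g = (let bs = (SOME bs. qbasis U K bs) in
     \<Sum>i<length bs. (THE a. \<exists>c. c i = a \<and>
         (\<lambda>x. g (bs ! i) x - lincomb c bs x) \<in> K))"

text \<open>Elements of the free associative algebra on generators a_t are
  finitely supported functions on words (lists) of generators.\<close>
definition mono :: "'v list \<Rightarrow> ('v list \<Rightarrow> complex)" where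
  "mono xs = (\<lambda>ys. if ys = xs then 1 else 0)"

definition tmul :: "('v list \<Rightarrow> complex) \<Rightarrow> ('v list \<Rightarrow> complex) \<Rightarrow> ('v list \<Rightarrow> complex)" where
  "tmul f g = (\<lambda>zs. \<Sum>k\<le>length zs. f (take k zs) * g (drop k zs))"

definition tensors :: "nat \<Rightarrow> ((real^2^2) list \<Rightarrow> complex) set" where
  "tensors m = {f. finite {xs. f xs \<noteq> 0} \<and> (\<forall>xs. f xs \<noteq> 0 \<longrightarrow> set xs \<subseteq> refls m)}"

definition tensors_deg :: "nat \<Rightarrow> nat \<Rightarrow> ((real^2^2) list \<Rightarrow> complex) set" where
  "tensors_deg m p = {f \<in> tensors m. \<forall>xs. f xs \<noteq> 0 \<longrightarrow> length xs = p}"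

text \<open>{H_t1,...,H_tp} is linearly dependent iff codim(H_t1 \<inter> ... \<inter> H_tp) < p.\<close>
definition dependent_list :: "(real^2^2) list \<Rightarrow> bool" where
  "dependent_list ts \<longleftrightarrow>
     2 < dim (\<Inter>i\<in>{..<length ts}. fixspace (ts ! i)) + length ts"

definition relators :: "nat \<Rightarrow> ((real^2^2) list \<Rightarrow> complex) set" where
  "relators m =
     {(\<lambda>zs. mono [t, t'] zs + mono [t', t] zs) | t t'. t \<in> refls m \<and> t' \<in> refls m}
   \<union> {(\<lambda>zs. \<Sum>i<length ts. (-1) ^ (i + 1) * mono (take i ts @ drop (Suc i) ts) zs) | ts.
        set ts \<subseteq> refls m \<and> dependent_list ts}"

inductive_set os_ideal :: "nat \<Rightarrow> ((real^2^2) list \<Rightarrow> complex) set" for m where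
  zero: "(\<lambda>_. 0) \<in> os_ideal m"
| add: "f \<in> os_ideal m \<Longrightarrow> g \<in> os_ideal m \<Longrightarrow> (\<lambda>x. f x + g x) \<in> os_ideal m"
| scal: "f \<in> os_ideal m \<Longrightarrow> smult c f \<in> os_ideal m"
| gen: "r \<in> relators m \<Longrightarrow> set u \<subseteq> refls m \<Longrightarrow> set v \<subseteq> refls m \<Longrightarrow>
        tmul (tmul (mono u) r) (mono v) \<in> os_ideal m"

text \<open>Right action a_t . w = a_{w^-1 t w}, extended multiplicatively.\<close>
definition act :: "real^2^2 \<Rightarrow> ((real^2^2) list \<Rightarrow> complex) \<Rightarrow> ((real^2^2) list \<Rightarrow> complex)" where
  "act w f = (\<lambda>ys. f (map (\<lambda>t. w ** t ** matrix_inv w) ys))"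

definition oschar_deg :: "nat \<Rightarrow> nat \<Rightarrow> real^2^2 \<Rightarrow> complex" where
  "oschar_deg m p w = qtrace (tensors_deg m p) (os_ideal m \<inter> tensors_deg m p) (act w)"

definition oschar :: "nat \<Rightarrow> real^2^2 \<Rightarrow> complex" where
  "oschar m w = qtrace (tensors m) (os_ideal m) (act w)"

end

theory Submission
  imports Defs
begin

text \<open>In rank two every monomial of degree at least three lies in the Orlik-Solomon ideal (use
  the relation of a dependent triple and \<open>a\<^sub>t\<^sup>2 = 0\<close>), so \<open>A(W) = A\<^sup>0 \<oplus> A\<^sup>1 \<oplus> A\<^sup>2\<close>.  Bases are
  \<open>1\<close>, the \<open>a\<^sub>t\<close>, and the products \<open>a\<^sub>s a\<^sub>t\<close> with \<open>t \<noteq> s\<close>; the dual functionals are evaluation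
  at \<open>1\<close> and at \<open>a\<^sub>t\<close>, and in degree two the coefficients of the boundary map
  \<open>\<partial>(a\<^sub>x a\<^sub>y) = a\<^sub>y - a\<^sub>x\<close>, which kills the ideal.  As \<open>W\<close> permutes the \<open>a\<^sub>t\<close>, the trace on \<open>A\<^sup>1\<close>
  is the number \<open>\<pi>(w)\<close> of reflections fixed by \<open>w\<close>.  On \<open>A\<^sup>2\<close>, \<open>w\<close> sends \<open>a\<^sub>s a\<^sub>t\<close> to
  \<open>a\<^bsub>w s\<^esub> a\<^bsub>w t\<^esub>\<close>, with boundary \<open>a\<^bsub>w t\<^esub> - a\<^bsub>w s\<^esub>\<close>; summing the \<open>a\<^sub>t\<close>-coefficients over
  \<open>t \<noteq> s\<close> gives \<open>(\<pi>(w) - [w s = s]) - (1 - [w s = s]) = \<pi>(w) - 1\<close>.\<close>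

section \<open>The dihedral group\<close>

definition rot :: "real \<Rightarrow> real^2^2" where
  "rot a = (\<chi> i j. if i = 1 \<and> j = 1 then cos a else if i = 1 \<and> j = 2 then - sin a
              else if i = 2 \<and> j = 1 then sin a else cos a)"

definition flip :: "real \<Rightarrow> real^2^2" where
  "flip a = (\<chi> i j. if i = 1 \<and> j = 1 then cos a else if i = 2 \<and> j = 2 then - cos a else sin a)"

lemma rot_mult_flip: "rot a ** flip b = flip (a + b)"
  by (simp add: vec_eq_iff forall_2 matrix_matrix_mult_def sum_2 rot_def flip_def cos_add sin_add)

lemma flip_mult_flip: "flip a ** flip b = rot (a - b)"
  by (simp add: vec_eq_iff forall_2 matrix_matrix_mult_def sum_2 rot_def flip_def cos_diff sin_diff)

lemma sref_eq_flip: "sref = flip 0"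
  by (simp add: vec_eq_iff forall_2 sref_def flip_def)

lemma tref_eq_flip: "tref m = flip (2 * pi / real m)"
  by (simp add: vec_eq_iff forall_2 tref_def flip_def)

lemma mat_1_eq_rot: "mat 1 = rot 0"
  by (simp add: vec_eq_iff forall_2 mat_def rot_def)

lemma orthogonal_matrix_rot: "orthogonal_matrix (rot a)"
  unfolding orthogonal_matrix
  by (simp add: vec_eq_iff forall_2 matrix_matrix_mult_def sum_2 rot_def transpose_def mat_def
      power2_eq_square[symmetric] algebra_simps)

lemma orthogonal_matrix_flip: "orthogonal_matrix (flip a)"
  unfolding orthogonal_matrix
  by (simp add: vec_eq_iff forall_2 matrix_matrix_mult_def sum_2 flip_def transpose_def mat_def
      power2_eq_square[symmetric] algebra_simps)

lemma dihedral_cases: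
  assumes "w \<in> dihedral m"
  obtains k :: int where "w = rot (2 * pi * k / m) \<or> w = flip (2 * pi * k / m)"
proof -
  have "\<exists>k::int. w = rot (2 * pi * k / m) \<or> w = flip (2 * pi * k / m)"
    using assms
  proof (induction rule: dihedral.induct)
    case one
    show ?case by (auto simp: mat_1_eq_rot intro: exI[of _ 0])
  next
    case (mul_s w)
    then show ?case by (auto simp: sref_eq_flip rot_mult_flip flip_mult_flip)
  next
    case (mul_t w)
    then obtain k :: int where "w = rot (2 * pi * k / m) \<or> w = flip (2 * pi * k / m)"
      by blast
    moreover have "2 * pi * k / m + 2 * pi / m = 2 * pi * (k + 1) / m"
      "2 * pi * k / m - 2 * pi / m = 2 * pi * (k - 1) / m"
      by (simp_all add: add_divide_distrib diff_divide_distrib algebra_simps)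
    ultimately show ?case by (metis tref_eq_flip rot_mult_flip flip_mult_flip)
  qed
  then show thesis using that by blast
qed

text \<open>Angles only matter modulo \<open>2\<pi>\<close>, so \<open>k\<close> may be reduced modulo \<open>m\<close>; for \<open>m = 0\<close>
  the angle \<open>2\<pi>k/m\<close> is \<open>0\<close>, as division by zero yields zero.\<close>
lemma angle_mod:
  fixes k :: int
  shows "\<exists>j::nat<max 1 m.
    rot (2 * pi * k / m) = rot (2 * pi * j / m) \<and> flip (2 * pi * k / m) = flip (2 * pi * j / m)"
proof (cases "m = 0")
  case False
  define j where "j = nat (k mod int m)"
  have j: "real_of_int k = real j + real m * of_int (k div int m)"
    using False by (simp add: j_def) (metis of_int_add of_int_mult of_int_of_nat_eq mod_mult_div_eq)
  have "2 * pi * k / m = 2 * pi * j / m + 2 * pi * of_int (k div int m)"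
    using False unfolding j by (simp add: field_simps)
  moreover have "j < max 1 m" using False by (simp add: j_def nat_less_iff)
  moreover have "cos (x + 2 * pi * of_int n) = cos x" "sin (x + 2 * pi * of_int n) = sin x"
    for x and n :: int
    by (simp_all add: cos_add sin_add)
  ultimately show ?thesis
    by (intro exI[of _ j]) (simp only: rot_def flip_def)
qed simp

lemma finite_dihedral: "finite (dihedral m)"
proof (rule finite_subset)
  let ?R = "(\<lambda>j::nat. rot (2 * pi * j / m)) ` {..<max 1 m}
    \<union> (\<lambda>j::nat. flip (2 * pi * j / m)) ` {..<max 1 m}"
  show "dihedral m \<subseteq> ?R"
  proof
    fix w assume "w \<in> dihedral m"
    then obtain k :: int where "w = rot (2 * pi * k / m) \<or> w = flip (2 * pi * k / m)"
      by (rule dihedral_cases)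
    then show "w \<in> ?R" using angle_mod[of m k] by blast
  qed
qed simp

lemma orthogonal_matrix_dihedral: "w \<in> dihedral m \<Longrightarrow> orthogonal_matrix w"
  by (metis dihedral_cases orthogonal_matrix_rot orthogonal_matrix_flip)

lemma dihedral_mult: "v \<in> dihedral m \<Longrightarrow> u \<in> dihedral m \<Longrightarrow> u ** v \<in> dihedral m"
proof (induction rule: dihedral.induct)
  case (mul_s w) then show ?case by (metis dihedral.mul_s matrix_mul_assoc)
next
  case (mul_t w) then show ?case by (metis dihedral.mul_t matrix_mul_assoc)
qed simp

lemma dihedral_transpose: "w \<in> dihedral m \<Longrightarrow> transpose w \<in> dihedral m"
proof (induction rule: dihedral.induct)
  case one then show ?case by (simp add: transpose_mat dihedral.one)
next
  case (mul_s w)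
  have "transpose sref = sref" "sref \<in> dihedral m"
    using dihedral.mul_s[OF dihedral.one] by (auto simp: vec_eq_iff forall_2 sref_def transpose_def)
  then show ?case using mul_s by (simp add: matrix_transpose_mul dihedral_mult)
next
  case (mul_t w)
  have "transpose (tref m) = tref m" "tref m \<in> dihedral m"
    using dihedral.mul_t[OF dihedral.one] by (auto simp: vec_eq_iff forall_2 tref_def transpose_def)
  then show ?case using mul_t by (simp add: matrix_transpose_mul dihedral_mult)
qed

section \<open>Reflections and the reflection arrangement\<close>

definition conj_mat :: "real^2^2 \<Rightarrow> real^2^2 \<Rightarrow> real^2^2" where
  "conj_mat w t = w ** t ** transpose w"

lemma conj_mat_transpose_cancel:
  assumes "orthogonal_matrix w"
  shows "conj_mat w (conj_mat (transpose w) t) = t" "conj_mat (transpose w) (conj_mat w t) = t"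
proof -
  have "conj_mat w (conj_mat (transpose w) t) = (w ** transpose w) ** t ** (w ** transpose w)"
    "conj_mat (transpose w) (conj_mat w t) = (transpose w ** w) ** t ** (transpose w ** w)"
    by (simp_all only: conj_mat_def transpose_transpose matrix_mul_assoc)
  then show "conj_mat w (conj_mat (transpose w) t) = t" "conj_mat (transpose w) (conj_mat w t) = t"
    using assms by (simp_all add: orthogonal_matrix_def)
qed

lemma conj_mat_dihedral: "w \<in> dihedral m \<Longrightarrow> t \<in> dihedral m \<Longrightarrow> conj_mat w t \<in> dihedral m"
  by (simp add: conj_mat_def dihedral_mult dihedral_transpose)

lemma fixspace_conj_mat:
  assumes "orthogonal_matrix w"
  shows "fixspace (conj_mat w t) = (\<lambda>x. w *v x) ` fixspace t"
proof -
  have wT: "transpose w ** w = mat 1" "w ** transpose w = mat 1"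
    using assms by (simp_all add: orthogonal_matrix_def)
  have conj_apply: "conj_mat w t *v (w *v y) = w *v (t *v y)" for y
    using wT by (simp add: conj_mat_def matrix_vector_mul_assoc flip: matrix_mul_assoc)
  have w_back: "w *v (transpose w *v x) = x" for x
    using wT by (metis matrix_vector_mul_assoc matrix_vector_mul_lid)
  have inj: "w *v y = w *v z \<longleftrightarrow> y = z" for y z
    using wT by (metis matrix_vector_mul_assoc matrix_vector_mul_lid)
  show ?thesis
  proof (intro set_eqI iffI)
    fix x assume x: "x \<in> fixspace (conj_mat w t)"
    define y where "y = transpose w *v x"
    have x_eq: "x = w *v y" using w_back[of x, folded y_def] by simp
    then have "w *v (t *v y) = w *v y" using conj_apply[of y] x by (simp add: fixspace_def)
    then show "x \<in> (\<lambda>x. w *v x) ` fixspace t" using x_eq by (simp add: inj fixspace_def)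
  qed (auto simp: fixspace_def conj_apply)
qed

lemma dim_fixspace_conj_mat:
  assumes "orthogonal_matrix w"
  shows "dim (fixspace (conj_mat w t)) = dim (fixspace t)"
proof -
  have "inj (\<lambda>x. w *v x)"
    by (rule injI) (metis assms matrix_vector_mul_assoc matrix_vector_mul_lid orthogonal_matrix_def)
  then show ?thesis
    unfolding fixspace_conj_mat[OF assms]
    by (intro dim_image_eq matrix_vector_mul_linear) (auto intro: inj_on_subset)
qed

lemma conj_mat_refls: assumes "w \<in> dihedral m" "t \<in> refls m" shows "conj_mat w t \<in> refls m"
proof -
  have o: "orthogonal_matrix w" using assms orthogonal_matrix_dihedral by blast
  have "t ** t = mat 1" using assms by (simp add: refls_def is_reflection_def)
  have "conj_mat w t ** conj_mat w t = w ** (t ** ((transpose w ** w) ** t)) ** transpose w"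
    by (simp only: conj_mat_def matrix_mul_assoc)
  also have "\<dots> = mat 1"
    using o \<open>t ** t = mat 1\<close> by (simp add: orthogonal_matrix_def)
  finally have "conj_mat w t ** conj_mat w t = mat 1" .
  then show ?thesis using assms o
    by (auto simp: refls_def is_reflection_def conj_mat_dihedral dim_fixspace_conj_mat)
qed

lemma sref_refls: "sref \<in> refls m"
proof -
  have "sref ** sref = mat 1"
    by (simp add: vec_eq_iff forall_2 matrix_matrix_mult_def sum_2 sref_def mat_def)
  moreover have "fixspace sref = {x. axis 2 1 \<bullet> x = 0}"
    by (auto simp: fixspace_def vec_eq_iff forall_2 matrix_vector_mult_def sum_2 sref_def
        inner_axis')
  moreover have "dim {x::real^2. axis 2 1 \<bullet> x = 0} = 1"
    by (subst dim_hyperplane) (auto simp: axis_eq_0_iff)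
  moreover have "sref \<in> dihedral m"
    using dihedral.mul_s[OF dihedral.one] by simp
  ultimately show ?thesis by (simp add: refls_def is_reflection_def)
qed

lemma finite_refls: "finite (refls m)"
  using finite_dihedral by (auto simp: refls_def)

lemma dim_fixspace_refls: "t \<in> refls m \<Longrightarrow> dim (fixspace t) = 1"
  by (simp add: refls_def is_reflection_def)

lemma subspace_fixspace: "subspace (fixspace t)"
  by (auto simp: subspace_def fixspace_def matrix_vector_right_distrib matrix_vector_mult_scaleR)

lemma refls_transpose: assumes "t \<in> refls m" shows "transpose t = t"
proof -
  have "orthogonal_matrix t" using assms orthogonal_matrix_dihedral by (auto simp: refls_def)
  moreover have "t ** t = mat 1" using assms by (simp add: refls_def is_reflection_def)
  ultimately have "transpose t = (transpose t ** t) ** t"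
    by (simp add: matrix_mul_assoc[symmetric])
  also have "\<dots> = t" using \<open>orthogonal_matrix t\<close> by (simp add: orthogonal_matrix_def)
  finally show ?thesis .
qed

text \<open>An orthogonal involution is the orthogonal reflection in its fixed line: \<open>v + t v\<close>
  lies on the line and \<open>v - t v\<close> is orthogonal to it, so \<open>t\<close> is determined by \<open>fixspace t\<close>.\<close>
lemma refls_eq_if_fixspace_eq:
  assumes "t \<in> refls m" "t' \<in> refls m" "fixspace t = fixspace t'"
  shows "t = t'"
proof -
  have tt: "t ** t = mat 1" "t' ** t' = mat 1"
    using assms by (simp_all add: refls_def is_reflection_def)
  have perp: "h \<bullet> c = 0" if "s \<in> refls m" "h \<in> fixspace s" "s *v c = - c" for s h c
  proof -
    have "h \<bullet> c = (s *v h) \<bullet> c" using that by (simp add: fixspace_def)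
    also have "\<dots> = h \<bullet> (s *v c)"
      using refls_transpose[OF that(1)] vector_transpose_matrix[of h s] dot_lmul_matrix[of h s c]
      by simp
    also have "\<dots> = - (h \<bullet> c)" using that by simp
    finally show ?thesis by simp
  qed
  have "t *v v = t' *v v" for v
  proof -
    let ?d = "t *v v - t' *v v"
    have "v + t *v v \<in> fixspace t" "v + t' *v v \<in> fixspace t'"
      using tt by (simp_all add: fixspace_def matrix_vector_right_distrib matrix_vector_mul_assoc
          add.commute)
    then have d: "?d \<in> fixspace t"
      using subspace_diff[OF subspace_fixspace, of "v + t *v v" t "v + t' *v v"] assms(3) by simp
    have "t *v (v - t *v v) = - (v - t *v v)" "t' *v (v - t' *v v) = - (v - t' *v v)"
      using tt by (simp_all add: matrix_vector_mult_diff_distrib matrix_vector_mul_assoc)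
    then have "?d \<bullet> (v - t' *v v) = 0" "?d \<bullet> (v - t *v v) = 0"
      using perp[OF assms(2), of ?d] perp[OF assms(1) d] d assms(3) by simp_all
    then have "?d \<bullet> ?d = 0" by (simp add: inner_diff_right)
    then show ?thesis by simp
  qed
  then show ?thesis by (simp add: matrix_eq)
qed

lemma refls_eq_if_fixspaces_meet:
  assumes "t \<in> refls m" "t' \<in> refls m" "1 \<le> dim (fixspace t \<inter> fixspace t')"
  shows "t = t'"
proof -
  have s: "subspace (fixspace t \<inter> fixspace t')"
    by (simp add: subspace_fixspace subspace_inter)
  have "fixspace t \<inter> fixspace t' = fixspace t" "fixspace t \<inter> fixspace t' = fixspace t'"
    by (rule subspace_dim_equal[OF s subspace_fixspace];
        use assms dim_fixspace_refls in auto)+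
  then show ?thesis using refls_eq_if_fixspace_eq assms by metis
qed

lemma dependent_list_iff:
  assumes "set ts \<subseteq> refls m"
  shows "dependent_list ts \<longleftrightarrow> 3 \<le> length ts \<or> (length ts = 2 \<and> ts ! 0 = ts ! 1)"
proof -
  consider "ts = []" | t where "ts = [t]" | t t' where "ts = [t, t']" | "3 \<le> length ts"
    by (induction ts rule: induct_list012) auto
  then show ?thesis
  proof cases
    case (2 t)
    then show ?thesis using assms by (simp add: dependent_list_def dim_fixspace_refls lessThan_Suc)
  next
    case (3 t t')
    have I: "(\<Inter>i\<in>{..<length ts}. fixspace (ts ! i)) = fixspace t \<inter> fixspace t'"
      using 3 by (auto simp: lessThan_Suc numeral_2_eq_2)
    show ?thesis
      using 3 assms refls_eq_if_fixspaces_meet[of t m t'] dim_fixspace_refls[of t m]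
      unfolding dependent_list_def I by auto
  qed (simp_all add: dependent_list_def)
qed

lemma permchar_eq_card_fixed_refls:
  assumes "w \<in> dihedral m"
  shows "permchar m w = of_nat (card {t \<in> refls m. conj_mat w t = t})"
proof -
  let ?S = "{t \<in> refls m. conj_mat w t = t}"
  have o: "orthogonal_matrix w" using assms orthogonal_matrix_dihedral by blast
  have "H \<in> fixspace ` ?S" if H: "H \<in> arrangement m" "(\<lambda>x. w *v x) ` H = H" for H
  proof -
    obtain t where t: "t \<in> refls m" "H = fixspace t" using H(1) unfolding arrangement_def by blast
    then have "fixspace (conj_mat w t) = fixspace t" using fixspace_conj_mat[OF o] H(2) by simp
    then show ?thesis
      using refls_eq_if_fixspace_eq[OF conj_mat_refls[OF assms t(1)] t(1)] t by blast
  qed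
  moreover have "(\<lambda>x. w *v x) ` fixspace t = fixspace t" if "conj_mat w t = t" for t
    using fixspace_conj_mat[OF o, of t] that by simp
  ultimately have "{H \<in> arrangement m. (\<lambda>x. w *v x) ` H = H} = fixspace ` ?S"
    unfolding arrangement_def by blast
  moreover have "inj_on fixspace ?S"
    by (rule inj_onI) (use refls_eq_if_fixspace_eq in blast)
  ultimately show ?thesis unfolding permchar_def by (simp add: card_image)
qed

section \<open>Traces on quotient spaces\<close>

lemma lincomb_Cons: "lincomb c (v # vs) x = c 0 * v x + lincomb (\<lambda>j. c (Suc j)) vs x"
  unfolding lincomb_def by (simp only: length_Cons sum.lessThan_Suc_shift nth_Cons_0 nth_Cons_Suc)

locale lin_closed =
  fixes K :: "('v \<Rightarrow> complex) set"
  assumes zero_mem: "(\<lambda>_. 0) \<in> K"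
    and add_mem: "\<And>f h. f \<in> K \<Longrightarrow> h \<in> K \<Longrightarrow> (\<lambda>x. f x + h x) \<in> K"
    and scale_mem: "\<And>f c. f \<in> K \<Longrightarrow> (\<lambda>x. c * f x) \<in> K"
begin

lemma diff_mem: "f \<in> K \<Longrightarrow> h \<in> K \<Longrightarrow> (\<lambda>x. f x - h x) \<in> K"
  using add_mem[of f "\<lambda>x. (-1) * h x"] scale_mem[of h "-1"] by simp

lemma sum_mem:
  assumes "finite A" "\<And>a. a \<in> A \<Longrightarrow> F a \<in> K"
  shows "(\<lambda>x. \<Sum>a\<in>A. c a * F a x) \<in> K"
  using assms
proof (induction A rule: finite_induct)
  case (insert a A)
  then show ?case using add_mem[OF scale_mem] by simp
qed (simp add: zero_mem)

lemma coords_exist: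
  assumes "f \<in> cspan (K \<union> set cs)"
  shows "\<exists>c. (\<lambda>x. f x - lincomb c cs x) \<in> K"
proof -
  obtain vs e where vs: "set vs \<subseteq> K \<union> set cs" "f = lincomb e vs"
    using assms unfolding cspan_def by blast
  have "\<exists>c. (\<lambda>x. lincomb e vs x - lincomb c cs x) \<in> K" using vs(1)
  proof (induction vs arbitrary: e)
    case Nil
    have "(\<lambda>x. lincomb e [] x - lincomb (\<lambda>_. 0) cs x) = (\<lambda>_. 0)" by (simp add: lincomb_def)
    then show ?case using zero_mem by metis
  next
    case (Cons v vs)
    obtain c where c: "(\<lambda>x. lincomb (\<lambda>j. e (Suc j)) vs x - lincomb c cs x) \<in> K"
      using Cons by auto
    show ?case
    proof (cases "v \<in> K")
      case True
      have "(\<lambda>x. lincomb e (v # vs) x - lincomb c cs x)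
          = (\<lambda>x. e 0 * v x + (lincomb (\<lambda>j. e (Suc j)) vs x - lincomb c cs x))"
        by (simp add: lincomb_Cons add_diff_eq)
      then show ?thesis using add_mem[OF scale_mem[OF True] c] by metis
    next
      case False
      then obtain j where j: "j < length cs" "v = cs ! j"
        using Cons.prems by (auto simp: in_set_conv_nth)
      define c' where "c' = (\<lambda>l. c l + (if l = j then e 0 else 0))"
      have "(\<Sum>l<length cs. (if l = j then e 0 else 0) * (cs ! l) x)
          = (\<Sum>l<length cs. if l = j then e 0 * v x else 0)" for x
        using j by (intro sum.cong) auto
      then have "lincomb c' cs x = lincomb c cs x + e 0 * v x" for x
        using j by (simp add: lincomb_def c'_def distrib_right sum.distrib)
      then have "(\<lambda>x. lincomb e (v # vs) x - lincomb c' cs x)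
          = (\<lambda>x. lincomb (\<lambda>j. e (Suc j)) vs x - lincomb c cs x)"
        by (simp add: lincomb_Cons)
      then show ?thesis using c by metis
    qed
  qed
  then show ?thesis using vs(2) by simp
qed

lemma coord_eq:
  assumes "qbasis U K cs" "(\<lambda>x. f x - lincomb c cs x) \<in> K" "l < length cs"
  shows "(THE a. \<exists>c. c l = a \<and> (\<lambda>x. f x - lincomb c cs x) \<in> K) = c l"
proof (rule the_equality)
  fix a assume "\<exists>c'. c' l = a \<and> (\<lambda>x. f x - lincomb c' cs x) \<in> K"
  then obtain c' where c': "c' l = a" "(\<lambda>x. f x - lincomb c' cs x) \<in> K" by blast
  have "(\<lambda>x. (f x - lincomb c' cs x) - (f x - lincomb c cs x)) = lincomb (\<lambda>j. c j - c' j) cs"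
    by (rule ext) (simp add: lincomb_def sum_subtractf left_diff_distrib)
  then have "lincomb (\<lambda>j. c j - c' j) cs \<in> K" using diff_mem[OF c'(2) assms(2)] by simp
  then show "a = c l" using assms(1,3) c'(1) unfolding qbasis_def by auto
qed (use assms(2) in blast)

end

text \<open>\<open>qtrace\<close> picks an arbitrary quotient basis with \<open>SOME\<close>; it is computed here from an
  explicit dual system of vectors \<open>B a\<close> and functionals \<open>\<phi> a\<close> vanishing on \<open>K\<close>.\<close>
locale quotient_dual_system = lin_closed K
  for K :: "('v \<Rightarrow> complex) set" +
  fixes U :: "('v \<Rightarrow> complex) set"
    and B :: "'i \<Rightarrow> ('v \<Rightarrow> complex)" and \<phi> :: "'i \<Rightarrow> ('v \<Rightarrow> complex) \<Rightarrow> complex"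
    and I :: "'i set"
  assumes finite_index: "finite I"
    and basis_mem: "\<And>a. a \<in> I \<Longrightarrow> B a \<in> U"
    and \<phi>_add: "\<And>a f h. a \<in> I \<Longrightarrow> \<phi> a (\<lambda>x. f x + h x) = \<phi> a f + \<phi> a h"
    and \<phi>_scale: "\<And>a f c. a \<in> I \<Longrightarrow> \<phi> a (\<lambda>x. c * f x) = c * \<phi> a f"
    and \<phi>_vanish: "\<And>a f. a \<in> I \<Longrightarrow> f \<in> K \<Longrightarrow> \<phi> a f = 0"
    and \<phi>_basis: "\<And>a b. a \<in> I \<Longrightarrow> b \<in> I \<Longrightarrow> \<phi> a (B b) = (if a = b then 1 else 0)"
    and expansion_mem: "\<And>f. f \<in> U \<Longrightarrow> (\<lambda>x. f x - (\<Sum>a\<in>I. \<phi> a f * B a x)) \<in> K"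
begin

lemma \<phi>_sum:
  assumes "a \<in> I" "finite A"
  shows "\<phi> a (\<lambda>x. \<Sum>j\<in>A. c j * F j x) = (\<Sum>j\<in>A. c j * \<phi> a (F j))"
  using assms(2)
proof (induction A rule: finite_induct)
  case empty
  have "\<phi> a (\<lambda>x. 0 * B a x) = 0 * \<phi> a (B a)" using assms(1) \<phi>_scale by blast
  then show ?case by simp
next
  case (insert j A)
  then show ?case using assms(1) \<phi>_add \<phi>_scale by simp
qed

lemma \<phi>_diff: "a \<in> I \<Longrightarrow> \<phi> a (\<lambda>x. f x - h x) = \<phi> a f - \<phi> a h"
  using \<phi>_add[of a f "\<lambda>x. (-1) * h x"] \<phi>_scale[of a "-1" h] by simp

lemma qbasis_exists: "\<exists>bs. qbasis U K bs"
proof -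
  obtain L where L: "distinct L" "set L = I" using finite_distinct_list[OF finite_index] by blast
  have sum_L: "(\<Sum>j<length L. h (L ! j)) = (\<Sum>a\<in>I. h a)" for h :: "'i \<Rightarrow> complex"
    using sum.reindex_bij_betw[OF bij_betw_nth[OF L(1) refl refl], of h] L(2) by simp
  define bs where "bs = map B L"
  have "f \<in> cspan (K \<union> set bs)" if f: "f \<in> U" for f
  proof -
    define k where "k = (\<lambda>x. f x - (\<Sum>a\<in>I. \<phi> a f * B a x))"
    define c where "c = (\<lambda>j::nat. if j = 0 then 1 else \<phi> (L ! (j - 1)) f)"
    have "lincomb c (k # bs) x = k x + (\<Sum>j<length L. \<phi> (L ! j) f * B (L ! j) x)" for x
      unfolding lincomb_Cons by (simp add: lincomb_def c_def bs_def)
    also have "\<dots>x = f x" for x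
      using sum_L[of "\<lambda>a. \<phi> a f * B a x"] by (simp add: k_def)
    finally have "f = lincomb c (k # bs)" by auto
    moreover have "k \<in> K" using expansion_mem[OF f] by (simp add: k_def)
    ultimately show ?thesis unfolding cspan_def by (intro CollectI exI[of _ "k # bs"]) auto
  qed
  moreover have "c j = 0" if "lincomb c bs \<in> K" "j < length bs" for c j
  proof -
    have jI: "L ! j \<in> I" using that(2) L by (auto simp: bs_def)
    have "0 = \<phi> (L ! j) (lincomb c bs)" using \<phi>_vanish[OF jI that(1)] by simp
    also have "\<dots> = (\<Sum>i<length L. c i * \<phi> (L ! j) (B (L ! i)))"
      using \<phi>_sum[OF jI, of "{..<length L}" c "\<lambda>i. B (L ! i)"] by (simp add: lincomb_def bs_def)
    also have "\<dots> = (\<Sum>i<length L. if i = j then c i else 0)"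
      using L that(2) by (intro sum.cong) (auto simp: \<phi>_basis nth_eq_iff_index_eq bs_def)
    also have "\<dots> = c j" using that(2) by (simp add: bs_def)
    finally show ?thesis by simp
  qed
  ultimately have "qbasis U K bs"
    using basis_mem L(2) unfolding qbasis_def bs_def by auto
  then show ?thesis ..
qed

context
  fixes g :: "('v \<Rightarrow> complex) \<Rightarrow> ('v \<Rightarrow> complex)"
  assumes g_U: "\<And>f. f \<in> U \<Longrightarrow> g f \<in> U" and g_K: "\<And>f. f \<in> K \<Longrightarrow> g f \<in> K"
    and g_add: "\<And>f h. g (\<lambda>x. f x + h x) = (\<lambda>x. g f x + g h x)"
    and g_scale: "\<And>f c. g (\<lambda>x. c * f x) = (\<lambda>x. c * g f x)"
begin

lemma g_diff_sum: "g (\<lambda>x. f x - (\<Sum>a\<in>I. c a * F a x)) = (\<lambda>x. g f x - (\<Sum>a\<in>I. c a * g (F a) x))"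
proof -
  have "g (\<lambda>x. \<Sum>a\<in>A. c a * F a x) = (\<lambda>x. \<Sum>a\<in>A. c a * g (F a) x)" if "finite A" for A
    using that
  proof (induction A rule: finite_induct)
    case empty
    show ?case using g_scale[of 0 "\<lambda>_. 0"] by simp
  qed (simp add: g_add g_scale)
  then show ?thesis using finite_index g_add[of f "\<lambda>x. -1 * _ x"] g_scale[of "-1"] by simp
qed

text \<open>The \<open>THE\<close> term is the \<open>i\<close>-th coordinate of \<open>g (cs ! i)\<close> in the quotient basis \<open>cs\<close>.\<close>
lemma coord_image:
  assumes qc: "qbasis U K cs" and i: "i < length cs"
    and D: "\<And>a. a \<in> I \<Longrightarrow> (\<lambda>x. g (B a) x - lincomb (D a) cs x) \<in> K"
  shows "(THE a. \<exists>c. c i = a \<and> (\<lambda>x. g (cs ! i) x - lincomb c cs x) \<in> K)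
    = (\<Sum>a\<in>I. \<phi> a (cs ! i) * D a i)"
proof -
  have "cs ! i \<in> U" using qc i unfolding qbasis_def by auto
  then have k1: "(\<lambda>x. g (cs ! i) x - (\<Sum>a\<in>I. \<phi> a (cs ! i) * g (B a) x)) \<in> K"
    using g_K[OF expansion_mem] g_diff_sum by metis
  have k2: "(\<lambda>x. \<Sum>a\<in>I. \<phi> a (cs ! i) * (g (B a) x - lincomb (D a) cs x)) \<in> K"
    using sum_mem[OF finite_index, of "\<lambda>a x. g (B a) x - lincomb (D a) cs x" "\<lambda>a. \<phi> a (cs ! i)"] D
    by blast
  have "lincomb (\<lambda>l. \<Sum>a\<in>I. \<phi> a (cs ! i) * D a l) cs x
      = (\<Sum>a\<in>I. \<phi> a (cs ! i) * lincomb (D a) cs x)" for x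
    by (simp add: lincomb_def sum_distrib_left sum_distrib_right mult.assoc sum.swap[of _ I])
  then have "(\<lambda>x. g (cs ! i) x - lincomb (\<lambda>l. \<Sum>a\<in>I. \<phi> a (cs ! i) * D a l) cs x) \<in> K"
    using add_mem[OF k1 k2] by (simp add: right_diff_distrib sum_subtractf)
  from coord_eq[OF qc this i] show ?thesis by simp
qed

theorem qtrace_eq: "qtrace U K g = (\<Sum>a\<in>I. \<phi> a (g (B a)))"
proof -
  define cs where "cs = (SOME bs. qbasis U K bs)"
  have qc: "qbasis U K cs" unfolding cs_def using qbasis_exists by (rule someI_ex)
  have "\<forall>a\<in>I. \<exists>d. (\<lambda>x. g (B a) x - lincomb d cs x) \<in> K"
    using coords_exist g_U basis_mem qc unfolding qbasis_def by blast
  then obtain D where D: "\<And>a. a \<in> I \<Longrightarrow> (\<lambda>x. g (B a) x - lincomb (D a) cs x) \<in> K"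
    by metis
  have "qtrace U K g = (\<Sum>i<length cs. \<Sum>a\<in>I. \<phi> a (cs ! i) * D a i)"
    unfolding qtrace_def Let_def cs_def[symmetric] using coord_image[OF qc _ D] by simp
  also have "\<dots> = (\<Sum>a\<in>I. \<Sum>i<length cs. D a i * \<phi> a (cs ! i))"
    by (subst sum.swap) (simp add: mult.commute)
  also have "\<dots> = (\<Sum>a\<in>I. \<phi> a (lincomb (D a) cs))"
    unfolding lincomb_def by (intro sum.cong refl \<phi>_sum[symmetric]) simp_all
  also have "\<dots> = (\<Sum>a\<in>I. \<phi> a (g (B a)))"
    using \<phi>_vanish[OF _ D] \<phi>_diff by (intro sum.cong refl) (metis diff_eq_eq add_0)
  finally show ?thesis .
qed

end

end

section \<open>The tensor algebra and the Orlik-Solomon ideal\<close>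

lemma lin_closed_Int: "lin_closed A \<Longrightarrow> lin_closed B \<Longrightarrow> lin_closed (A \<inter> B)"
  unfolding lin_closed_def by blast

lemma lin_closed_finite_support:
  "lin_closed {f :: 'v \<Rightarrow> complex. finite {x. f x \<noteq> 0} \<and> (\<forall>x. f x \<noteq> 0 \<longrightarrow> P x)}"
proof
  fix f h :: "'v \<Rightarrow> complex"
  assume "f \<in> {f. finite {x. f x \<noteq> 0} \<and> (\<forall>x. f x \<noteq> 0 \<longrightarrow> P x)}"
    "h \<in> {f. finite {x. f x \<noteq> 0} \<and> (\<forall>x. f x \<noteq> 0 \<longrightarrow> P x)}"
  moreover have "{x. f x + h x \<noteq> 0} \<subseteq> {x. f x \<noteq> 0} \<union> {x. h x \<noteq> 0}" by auto
  ultimately show "(\<lambda>x. f x + h x) \<in> {f. finite {x. f x \<noteq> 0} \<and> (\<forall>x. f x \<noteq> 0 \<longrightarrow> P x)}"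
    by (auto intro: finite_subset)
qed (auto intro: finite_subset[rotated])

lemma finite_support_expansion:
  assumes "finite {x. f x \<noteq> 0}"
  shows "f zs = (\<Sum>l\<in>{x. f x \<noteq> 0}. f l * mono l zs)"
proof -
  have "(\<Sum>l\<in>{x. f x \<noteq> 0}. f l * mono l zs) = (\<Sum>l\<in>{x. f x \<noteq> 0}. if l = zs then f zs else 0)"
    by (intro sum.cong) (auto simp: mono_def)
  then show ?thesis using assms by (simp add: sum.delta')
qed

lemma lin_closed_tensors_deg: "lin_closed (tensors_deg m p)"
proof -
  have "tensors_deg m p
      = {f. finite {x. f x \<noteq> 0} \<and> (\<forall>x. f x \<noteq> 0 \<longrightarrow> set x \<subseteq> refls m \<and> length x = p)}"
    by (auto simp: tensors_deg_def tensors_def)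
  then show ?thesis using lin_closed_finite_support by simp
qed

interpretation os_ideal: lin_closed "os_ideal m" for m
proof
  fix f c assume "f \<in> os_ideal m"
  then show "(\<lambda>x. c * f x) \<in> os_ideal m" using os_ideal.scal[of f m c] by (simp add: smult_def)
qed (auto intro: os_ideal.intros)

lemma mono_mem_tensors_deg: "set l \<subseteq> refls m \<Longrightarrow> mono l \<in> tensors_deg m (length l)"
  by (simp add: tensors_deg_def tensors_def mono_def)

lemma mono_mem_tensors: "set l \<subseteq> refls m \<Longrightarrow> mono l \<in> tensors m"
  by (simp add: tensors_def mono_def)

lemma tensors_deg_subset: "tensors_deg m p \<subseteq> tensors m"
  by (simp add: tensors_deg_def)

lemma tmul_mono_mono: "tmul (mono a) (mono b) = mono (a @ b)"
proof
  fix zs :: "'a list"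
  have "tmul (mono a) (mono b) zs = (\<Sum>k\<le>length zs. if k = length a \<and> zs = a @ b then 1 else 0)"
    unfolding tmul_def by (intro sum.cong refl) (auto simp: mono_def append_eq_conv_conj)
  then show "tmul (mono a) (mono b) zs = mono (a @ b) zs"
    by (auto simp: mono_def sum.delta')
qed

lemma tmul_sum_left:
  "finite J \<Longrightarrow> tmul (\<lambda>zs. \<Sum>j\<in>J. c j * f j zs) g = (\<lambda>zs. \<Sum>j\<in>J. c j * tmul (f j) g zs)"
  unfolding tmul_def
  by (rule ext) (simp add: sum_distrib_right sum_distrib_left mult.assoc sum.swap[of _ J])

lemma tmul_sum_right:
  "finite J \<Longrightarrow> tmul f (\<lambda>zs. \<Sum>j\<in>J. c j * g j zs) = (\<lambda>zs. \<Sum>j\<in>J. c j * tmul f (g j) zs)"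
  unfolding tmul_def
  by (rule ext) (simp add: sum_distrib_left mult.left_commute sum.swap[of _ J])

lemma tmul_add_left: "tmul (\<lambda>zs. f zs + h zs) g = (\<lambda>zs. tmul f g zs + tmul h g zs)"
  unfolding tmul_def by (rule ext) (simp add: distrib_right sum.distrib)

lemma tmul_add_right: "tmul f (\<lambda>zs. g zs + h zs) = (\<lambda>zs. tmul f g zs + tmul f h zs)"
  unfolding tmul_def by (rule ext) (simp add: distrib_left sum.distrib)

lemma tmul_mono_left:
  "tmul (mono u) f zs = (if take (length u) zs = u then f (drop (length u) zs) else 0)"
proof -
  have "mono u (take k zs) * f (drop k zs)
      = (if k = length u then if take (length u) zs = u then f (drop (length u) zs) else 0 else 0)"
    if "k \<le> length zs" for k
    using that by (auto simp: mono_def min_absorb2)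
  then have "tmul (mono u) f zs = (\<Sum>k\<le>length zs.
      if k = length u then if take (length u) zs = u then f (drop (length u) zs) else 0 else 0)"
    unfolding tmul_def by (intro sum.cong) auto
  then show ?thesis by (auto simp: sum.delta' dest: arg_cong[of _ _ length])
qed

lemma tmul_mono_right:
  "tmul f (mono v) zs = (if length v \<le> length zs \<and> drop (length zs - length v) zs = v
     then f (take (length zs - length v) zs) else 0)"
proof -
  let ?P = "length v \<le> length zs \<and> drop (length zs - length v) zs = v"
  have "f (take k zs) * mono v (drop k zs)
      = (if k = length zs - length v then if ?P then f (take k zs) else 0 else 0)"
    if "k \<le> length zs" for k
    using that by (auto simp: mono_def)
  then have "tmul f (mono v) zs
      = (\<Sum>k\<le>length zs. if k = length zs - length v then if ?P then f (take k zs) else 0 else 0)"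
    unfolding tmul_def by (intro sum.cong) auto
  then show ?thesis by (simp add: sum.delta')
qed

lemma tmul_mono_Nil [simp]: "tmul (mono []) f = f" "tmul f (mono []) = f"
  by (simp_all add: fun_eq_iff tmul_mono_left tmul_mono_right)

definition anticomm_rel :: "real^2^2 \<Rightarrow> real^2^2 \<Rightarrow> (real^2^2) list \<Rightarrow> complex" where
  "anticomm_rel t t' = (\<lambda>zs. mono [t, t'] zs + mono [t', t] zs)"

definition boundary_rel :: "(real^2^2) list \<Rightarrow> (real^2^2) list \<Rightarrow> complex" where
  "boundary_rel ts = (\<lambda>zs. \<Sum>i<length ts. (-1) ^ (i + 1) * mono (take i ts @ drop (Suc i) ts) zs)"

lemma relators_iff: "r \<in> relators m \<longleftrightarrow>
   (\<exists>t t'. r = anticomm_rel t t' \<and> t \<in> refls m \<and> t' \<in> refls m) \<or>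
   (\<exists>ts. r = boundary_rel ts \<and> set ts \<subseteq> refls m \<and> dependent_list ts)"
  unfolding relators_def anticomm_rel_def boundary_rel_def by (simp only: Un_iff mem_Collect_eq)

lemma boundary_rel_3:
  "boundary_rel [a, b, c] = (\<lambda>zs. - mono [b, c] zs + mono [a, c] zs - mono [a, b] zs)"
  by (simp add: fun_eq_iff boundary_rel_def numeral_3_eq_3 lessThan_Suc)

lemma boundary_rel_repeat: "boundary_rel [a, a] = (\<lambda>_. 0)"
  by (simp add: fun_eq_iff boundary_rel_def numeral_2_eq_2 lessThan_Suc)

lemma boundary_rel_short:
  assumes "length zs + 1 < length ts"
  shows "boundary_rel ts zs = 0"
proof -
  have "mono (take i ts @ drop (Suc i) ts) zs = 0" if "i < length ts" for i
    using that assms by (auto simp: mono_def)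
  then show ?thesis by (simp add: boundary_rel_def)
qed

lemma relators_cases:
  assumes "r \<in> relators m"
  obtains (anticomm) t t' where "r = anticomm_rel t t'" "t \<in> refls m" "t' \<in> refls m"
  | (triple) a b c where "r = boundary_rel [a, b, c]" "a \<in> refls m" "b \<in> refls m" "c \<in> refls m"
  | (long) ts where "r = boundary_rel ts" "4 \<le> length ts"
  | (zero) "r = (\<lambda>_. 0)"
proof -
  consider (A) t t' where "r = anticomm_rel t t'" "t \<in> refls m" "t' \<in> refls m"
    | (B) ts where "r = boundary_rel ts" "set ts \<subseteq> refls m" "dependent_list ts"
    using assms unfolding relators_iff by blast
  then show thesis
  proof cases
    case (B ts)
    then consider "length ts = 3" | "4 \<le> length ts" | "length ts = 2 \<and> ts ! 0 = ts ! 1"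
      using dependent_list_iff[of ts m] by linarith
    then show thesis
    proof cases
      case 1
      then obtain a b c where "ts = [a, b, c]" by (auto simp: numeral_3_eq_3 length_Suc_conv)
      then show thesis using triple B by auto
    next
      case 3
      then obtain a where "ts = [a, a]" by (auto simp: numeral_2_eq_2 length_Suc_conv)
      then show thesis using zero B by (simp add: boundary_rel_repeat)
    qed (use long B in blast)
  qed (use anticomm in blast)
qed

lemma relators_vanish_short:
  assumes "r \<in> relators m" "length zs \<le> 1"
  shows "r zs = 0"
  using assms(1)
proof (cases rule: relators_cases)
  case (anticomm t t')
  have "zs \<noteq> [t, t']" "zs \<noteq> [t', t]" using assms(2) by auto
  then show ?thesis by (simp add: anticomm anticomm_rel_def mono_def)
next
  case (triple a b c)
  have "length zs + 1 < length [a, b, c]" using assms(2) by simp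
  then show ?thesis unfolding triple by (rule boundary_rel_short)
next
  case (long ts)
  have "length zs + 1 < length ts" using assms(2) long(2) by simp
  then show ?thesis unfolding long by (rule boundary_rel_short)
qed simp

lemma os_ideal_generator_short:
  assumes "r \<in> relators m" "length zs \<le> 2"
  shows "tmul (tmul (mono u) r) (mono v) zs = (if u = [] \<and> v = [] then r zs else 0)"
proof (cases "u = [] \<and> v = []")
  case False
  have "length (drop (length u) (take (length zs - length v) zs)) \<le> 1"
    if "take (length u) (take (length zs - length v) zs) = u" "length v \<le> length zs"
  proof -
    have "length u \<le> length zs - length v"
      using that(1) by (metis length_take min.bounded_iff nat_le_linear)
    moreover have "1 \<le> length u + length v" using False by (cases u; cases v) auto
    ultimately show ?thesis using assms(2) that(2) by auto
  qed
  then show ?thesis using False relators_vanish_short[OF assms(1)]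
    by (simp add: tmul_mono_right tmul_mono_left)
qed simp

lemma relator_mem_os_ideal: "r \<in> relators m \<Longrightarrow> r \<in> os_ideal m"
  using os_ideal.gen[of r m "[]" "[]"] by simp

lemma tmul_anticomm_rel:
  "tmul (tmul (mono u) (anticomm_rel a b)) (mono v)
     = (\<lambda>zs. mono (u @ [a, b] @ v) zs + mono (u @ [b, a] @ v) zs)"
  unfolding anticomm_rel_def
  by (simp add: tmul_add_right tmul_add_left tmul_mono_mono eta_contract_eq)

lemma tmul_boundary_rel:
  "tmul (tmul (mono u) (boundary_rel ts)) (mono v)
     = (\<lambda>zs. \<Sum>i<length ts. (-1) ^ (i + 1) * mono (u @ (take i ts @ drop (Suc i) ts) @ v) zs)"
  unfolding boundary_rel_def
  by (simp only: tmul_sum_right[OF finite_lessThan] tmul_sum_left[OF finite_lessThan]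
      tmul_mono_mono append_assoc)

lemma mono_square_mem_os_ideal:
  assumes "x \<in> refls m" "set u \<subseteq> refls m" "set v \<subseteq> refls m"
  shows "mono (u @ [x, x] @ v) \<in> os_ideal m"
proof -
  have "anticomm_rel x x \<in> relators m" using assms(1) unfolding relators_iff by blast
  then have "tmul (tmul (mono u) (anticomm_rel x x)) (mono v) \<in> os_ideal m"
    using assms by (intro os_ideal.gen)
  then have "(\<lambda>zs. (1 / 2) * (mono (u @ [x, x] @ v) zs + mono (u @ [x, x] @ v) zs)) \<in> os_ideal m"
    unfolding tmul_anticomm_rel by (rule os_ideal.scale_mem)
  then show ?thesis by (simp add: eta_contract_eq)
qed

lemma boundary_rel_3_mem_os_ideal:
  "a \<in> refls m \<Longrightarrow> b \<in> refls m \<Longrightarrow> c \<in> refls m \<Longrightarrow> boundary_rel [a, b, c] \<in> relators m"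
  unfolding relators_iff by (auto simp: dependent_list_iff)

lemma mono_long_mem_os_ideal:
  assumes "set zs \<subseteq> refls m" "3 \<le> length zs"
  shows "mono zs \<in> os_ideal m"
proof -
  obtain x y z v where zs: "zs = x # y # z # v"
    using assms(2) by (metis Suc_le_length_iff numeral_3_eq_3)
  have refls: "x \<in> refls m" "y \<in> refls m" "z \<in> refls m" "set v \<subseteq> refls m"
    using assms(1) zs by auto
  have "tmul (tmul (mono [x]) (boundary_rel [x, y, z])) (mono v) \<in> os_ideal m"
    using refls by (intro os_ideal.gen boundary_rel_3_mem_os_ideal) auto
  then have gen: "(\<lambda>zs. - mono (x # y # z # v) zs + mono (x # x # z # v) zs
      - mono (x # x # y # v) zs) \<in> os_ideal m"
    by (simp add: tmul_boundary_rel numeral_3_eq_3 lessThan_Suc)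
  have "mono (x # x # z # v) \<in> os_ideal m" "mono (x # x # y # v) \<in> os_ideal m"
    using mono_square_mem_os_ideal[of x m "[]"] refls by simp_all
  from os_ideal.scale_mem[OF os_ideal.add_mem[OF os_ideal.diff_mem[OF gen this(1)] this(2)],
      of "-1"]
  show ?thesis using zs by (simp add: eta_contract_eq)
qed

section \<open>Coordinates on the Orlik-Solomon algebra\<close>

text \<open>The coefficient of \<open>a\<^sub>t\<close> in \<open>\<partial>f\<close>, where \<open>\<partial>(a\<^sub>x a\<^sub>y) = a\<^sub>y - a\<^sub>x\<close> is the Orlik-Solomon
  boundary map on degree two; \<open>\<partial>\<close> kills all degree-two relations.\<close>
definition boundary_coeff :: "nat \<Rightarrow> real^2^2 \<Rightarrow> ((real^2^2) list \<Rightarrow> complex) \<Rightarrow> complex" where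
  "boundary_coeff m t f = (\<Sum>x\<in>refls m. f [x, t]) - (\<Sum>y\<in>refls m. f [t, y])"

lemma boundary_coeff_add:
  "boundary_coeff m t (\<lambda>zs. f zs + h zs) = boundary_coeff m t f + boundary_coeff m t h"
  by (simp add: boundary_coeff_def sum.distrib)

lemma boundary_coeff_scale: "boundary_coeff m t (\<lambda>zs. c * f zs) = c * boundary_coeff m t f"
  by (simp add: boundary_coeff_def sum_distrib_left right_diff_distrib)

lemma boundary_coeff_diff:
  "boundary_coeff m t (\<lambda>zs. f zs - h zs) = boundary_coeff m t f - boundary_coeff m t h"
  by (simp add: boundary_coeff_def sum_subtractf)

lemma boundary_coeff_neg: "boundary_coeff m t (\<lambda>zs. - f zs) = - boundary_coeff m t f"
  by (simp add: boundary_coeff_def sum_negf)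

lemma boundary_coeff_cong:
  "(\<And>zs. length zs = 2 \<Longrightarrow> f zs = h zs) \<Longrightarrow> boundary_coeff m t f = boundary_coeff m t h"
  by (simp add: boundary_coeff_def)

lemma boundary_coeff_mono_pair:
  assumes "a \<in> refls m" "b \<in> refls m"
  shows "boundary_coeff m t (mono [a, b]) = (if b = t then 1 else 0) - (if a = t then 1 else 0)"
proof -
  have "(\<Sum>x\<in>refls m. mono [a, b] [x, t])
      = (\<Sum>x\<in>refls m. if x = a then (if b = t then 1 else 0) else 0)"
    "(\<Sum>y\<in>refls m. mono [a, b] [t, y]) = (\<Sum>y\<in>refls m. if y = b then (if a = t then 1 else 0) else 0)"
    by (auto simp: mono_def intro: sum.cong)
  then show ?thesis using assms finite_refls by (simp add: boundary_coeff_def sum.delta)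
qed

lemma boundary_coeff_relator:
  assumes "r \<in> relators m"
  shows "boundary_coeff m t r = 0"
  using assms
proof (cases rule: relators_cases)
  case (anticomm a b)
  then show ?thesis by (simp add: anticomm_rel_def boundary_coeff_add boundary_coeff_mono_pair)
next
  case (triple a b c)
  then show ?thesis
    by (simp add: boundary_rel_3 boundary_coeff_add boundary_coeff_diff boundary_coeff_neg
        boundary_coeff_mono_pair)
next
  case (long ts)
  then have "boundary_coeff m t r = boundary_coeff m t (\<lambda>_. 0)"
    by (intro boundary_coeff_cong) (simp add: boundary_rel_short)
  then show ?thesis by (simp add: boundary_coeff_def)
qed (simp add: boundary_coeff_def)

definition os_coord :: "nat \<Rightarrow> (real^2^2) list \<Rightarrow> ((real^2^2) list \<Rightarrow> complex) \<Rightarrow> complex" where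
  "os_coord m a f =
    (if a = [] then f [] else if length a = 1 then f a else boundary_coeff m (a ! 1) f)"

lemma os_coord_add: "os_coord m a (\<lambda>zs. f zs + h zs) = os_coord m a f + os_coord m a h"
  by (simp add: os_coord_def boundary_coeff_add)

lemma os_coord_scale: "os_coord m a (\<lambda>zs. c * f zs) = c * os_coord m a f"
  by (simp add: os_coord_def boundary_coeff_scale)

lemma os_coord_sum:
  "finite A \<Longrightarrow> os_coord m a (\<lambda>zs. \<Sum>l\<in>A. c l * F l zs) = (\<Sum>l\<in>A. c l * os_coord m a (F l))"
  by (induction A rule: finite_induct) (simp_all add: os_coord_add os_coord_scale,
      simp add: os_coord_def boundary_coeff_def)

lemma os_coord_os_ideal:
  assumes "f \<in> os_ideal m"
  shows "os_coord m a f = 0"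
proof -
  have "f [] = 0 \<and> (\<forall>t. f [t] = 0) \<and> (\<forall>t. boundary_coeff m t f = 0)"
    using assms
  proof (induction rule: os_ideal.induct)
    case (gen r u v)
    let ?G = "tmul (tmul (mono u) r) (mono v)"
    have "?G [] = 0" "?G [t] = 0" for t
      using os_ideal_generator_short[OF gen(1)] relators_vanish_short[OF gen(1)] by simp_all
    moreover have
      "boundary_coeff m t ?G = boundary_coeff m t (if u = [] \<and> v = [] then r else (\<lambda>_. 0))"
      for t by (intro boundary_coeff_cong) (simp add: os_ideal_generator_short[OF gen(1)])
    ultimately show ?case
      using boundary_coeff_relator[OF gen(1)] by (simp add: boundary_coeff_def)
  next
    case (add f g) then show ?case by (simp add: boundary_coeff_add)
  next
    case (scal f c) then show ?case by (simp add: smult_def boundary_coeff_scale)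
  qed (simp add: boundary_coeff_def)
  then show ?thesis by (auto simp: os_coord_def length_Suc_conv)
qed

text \<open>The no-broken-circuit basis for the ordering of \<open>T\<close> that puts \<open>s\<close> first.\<close>
definition os_basis :: "nat \<Rightarrow> (real^2^2) list set" where
  "os_basis m = {[]} \<union> (\<lambda>t. [t]) ` refls m \<union> (\<lambda>t. [sref, t]) ` (refls m - {sref})"

definition os_basis_deg :: "nat \<Rightarrow> nat \<Rightarrow> (real^2^2) list set" where
  "os_basis_deg m p = {a \<in> os_basis m. length a = p}"

lemma finite_os_basis: "finite (os_basis m)"
  by (simp add: os_basis_def finite_refls)

lemma os_basis_refls: "a \<in> os_basis m \<Longrightarrow> set a \<subseteq> refls m"
  using sref_refls by (auto simp: os_basis_def)

lemma os_basis_length: "a \<in> os_basis m \<Longrightarrow> length a \<le> 2"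
  by (auto simp: os_basis_def)

lemma sum_os_basis:
  "(\<Sum>a\<in>os_basis m. F a) = F [] + (\<Sum>t\<in>refls m. F [t]) + (\<Sum>t\<in>refls m - {sref}. F [sref, t])"
proof -
  let ?A = "(\<lambda>t. [t]) ` refls m" and ?B = "(\<lambda>t. [sref, t]) ` (refls m - {sref})"
  have "os_basis m = insert [] (?A \<union> ?B)" by (auto simp: os_basis_def)
  moreover have "[] \<notin> ?A \<union> ?B" by auto
  ultimately have "(\<Sum>a\<in>os_basis m. F a) = F [] + (\<Sum>a\<in>?A \<union> ?B. F a)"
    using finite_refls by simp
  also have "\<dots> = F [] + ((\<Sum>a\<in>?A. F a) + (\<Sum>a\<in>?B. F a))"
    using finite_refls by (subst sum.union_disjoint) auto
  finally show ?thesis by (simp add: sum.reindex inj_on_def add.assoc)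
qed

lemma os_coord_mono_os_basis:
  assumes "a \<in> os_basis m" "b \<in> os_basis m"
  shows "os_coord m a (mono b) = (if a = b then 1 else 0)"
proof -
  consider "a = []" | t where "a = [t]" | t where "a = [sref, t]" "t \<in> refls m" "t \<noteq> sref"
    using assms(1) unfolding os_basis_def by blast
  then show ?thesis
  proof cases
    case (3 t)
    consider "length b \<noteq> 2" | t' where "b = [sref, t']" "t' \<in> refls m"
      using assms(2) unfolding os_basis_def by auto
    then show ?thesis
    proof cases
      case 1
      then have "[x, t] \<noteq> b" "[t, x] \<noteq> b" for x by auto
      then have "boundary_coeff m t (mono b) = 0"
        by (simp add: boundary_coeff_def mono_def)
      then show ?thesis using 1 3 by (auto simp: os_coord_def)
    qed (use 3 sref_refls in \<open>auto simp: os_coord_def boundary_coeff_mono_pair\<close>)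
  qed (auto simp: os_coord_def mono_def)
qed

lemma os_coord_tensors_deg:
  assumes "f \<in> tensors_deg m p" "length a \<le> 2" "length a \<noteq> p"
  shows "os_coord m a f = 0"
proof -
  have vanish: "f zs = 0" if "length zs \<noteq> p" for zs
    using assms(1) that by (auto simp: tensors_deg_def)
  consider "length a = 0" | "length a = 1" | "length a = 2"
    using assms(2) by linarith
  then show ?thesis
  proof cases
    case 3
    then have "f [x, y] = 0" for x y using assms(3) vanish[of "[x, y]"] by simp
    then show ?thesis using 3 by (auto simp: os_coord_def boundary_coeff_def)
  qed (use assms(3) vanish in \<open>auto simp: os_coord_def\<close>)
qed

text \<open>Modulo the ideal, \<open>a\<^sub>x a\<^sub>y \<equiv> a\<^sub>s a\<^sub>y - a\<^sub>s a\<^sub>x\<close> by the relation for the dependent triple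
  \<open>(s, x, y)\<close>, and \<open>a\<^sub>s a\<^sub>s \<equiv> 0\<close>.\<close>
lemma mono_pair_expansion_mem_os_ideal:
  assumes x: "x \<in> refls m" and y: "y \<in> refls m"
  shows "(\<lambda>zs. mono [x, y] zs - (\<Sum>a\<in>os_basis m. os_coord m a (mono [x, y]) * mono a zs))
    \<in> os_ideal m"
proof -
  let ?s = sref
  let ?ind = "\<lambda>P. if P then 1 else 0 :: complex"
  have "mono [x, y] [] = 0" "mono [x, y] [t] = 0" for t by (simp_all add: mono_def)
  then have "(\<Sum>a\<in>os_basis m. os_coord m a (mono [x, y]) * mono a zs)
      = (\<Sum>t\<in>refls m - {?s}. (?ind (y = t) - ?ind (x = t)) * mono [?s, t] zs)" for zs
    using x y by (simp add: sum_os_basis os_coord_def boundary_coeff_mono_pair)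
  also have "\<dots>zs = (1 - ?ind (y = ?s)) * mono [?s, y] zs - (1 - ?ind (x = ?s)) * mono [?s, x] zs"
    for zs
  proof -
    have "(\<Sum>t\<in>refls m - {?s}. ?ind (u = t) * mono [?s, t] zs)
        = (1 - ?ind (u = ?s)) * mono [?s, u] zs"
      if "u \<in> refls m" for u
    proof -
      have "(\<Sum>t\<in>refls m - {?s}. ?ind (u = t) * mono [?s, t] zs)
          = (\<Sum>t\<in>refls m - {?s}. if u = t then mono [?s, u] zs else 0)"
        by (intro sum.cong) auto
      then show ?thesis using that finite_refls by simp
    qed
    then show ?thesis using x y by (simp add: left_diff_distrib sum_subtractf)
  qed
  finally have "(\<lambda>zs. mono [x, y] zs - (\<Sum>a\<in>os_basis m. os_coord m a (mono [x, y]) * mono a zs))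
      = (\<lambda>zs. (-1) * boundary_rel [?s, x, y] zs + (?ind (y = ?s) * mono [?s, ?s] zs
          - ?ind (x = ?s) * mono [?s, ?s] zs))"
    by (auto simp: boundary_rel_3 algebra_simps)
  moreover have "boundary_rel [?s, x, y] \<in> os_ideal m"
    using relator_mem_os_ideal boundary_rel_3_mem_os_ideal sref_refls x y by blast
  moreover have "mono [?s, ?s] \<in> os_ideal m"
    using mono_square_mem_os_ideal[OF sref_refls, of "[]" m "[]"] by simp
  ultimately show ?thesis
    by (simp only: os_ideal.add_mem os_ideal.diff_mem os_ideal.scale_mem)
qed

lemma mono_expansion_mem_os_ideal:
  assumes "set l \<subseteq> refls m"
  shows "(\<lambda>zs. mono l zs - (\<Sum>a\<in>os_basis m. os_coord m a (mono l) * mono a zs)) \<in> os_ideal m"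
proof -
  consider "length l \<le> 1" | x y where "l = [x, y]" | "3 \<le> length l"
    by (induction l rule: induct_list012) auto
  then show ?thesis
  proof cases
    case 1
    then have l: "l \<in> os_basis m" using assms by (cases l) (auto simp: os_basis_def)
    have "(\<Sum>a\<in>os_basis m. os_coord m a (mono l) * mono a zs)
        = (\<Sum>a\<in>os_basis m. if a = l then mono l zs else 0)" for zs
      using l by (intro sum.cong) (auto simp: os_coord_mono_os_basis)
    then have "(\<Sum>a\<in>os_basis m. os_coord m a (mono l) * mono a zs) = mono l zs" for zs
      using l finite_os_basis by (simp add: sum.delta')
    then show ?thesis using os_ideal.zero_mem by simp
  next
    case (2 x y)
    then show ?thesis using assms mono_pair_expansion_mem_os_ideal by simp
  next
    case 3
    have "os_coord m a (mono l) = 0" if "a \<in> os_basis m" for a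
      using 3 os_basis_length[OF that] mono_mem_tensors_deg[OF assms]
      by (intro os_coord_tensors_deg) auto
    then show ?thesis using mono_long_mem_os_ideal[OF assms 3] by (simp add: eta_contract_eq)
  qed
qed

lemma expansion_mem_os_ideal:
  assumes "f \<in> tensors m"
  shows "(\<lambda>zs. f zs - (\<Sum>a\<in>os_basis m. os_coord m a f * mono a zs)) \<in> os_ideal m"
proof -
  let ?S = "{x. f x \<noteq> 0}"
  have fin: "finite ?S" and supp: "\<And>l. l \<in> ?S \<Longrightarrow> set l \<subseteq> refls m"
    using assms by (auto simp: tensors_def)
  have f_eq: "f = (\<lambda>zs. \<Sum>l\<in>?S. f l * mono l zs)"
    by (rule ext) (rule finite_support_expansion[OF fin])
  have coord: "os_coord m a f = (\<Sum>l\<in>?S. f l * os_coord m a (mono l))" for a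
    using os_coord_sum[OF fin, where c = f and F = mono] by (simp only: f_eq[symmetric])
  have "(\<Sum>a\<in>os_basis m. os_coord m a f * mono a zs)
      = (\<Sum>l\<in>?S. f l * (\<Sum>a\<in>os_basis m. os_coord m a (mono l) * mono a zs))" for zs
    unfolding coord sum_distrib_left sum_distrib_right
    by (subst sum.swap) (simp add: mult.assoc)
  then have "(\<lambda>zs. f zs - (\<Sum>a\<in>os_basis m. os_coord m a f * mono a zs))
      = (\<lambda>zs. \<Sum>l\<in>?S. f l * (mono l zs - (\<Sum>a\<in>os_basis m. os_coord m a (mono l) * mono a zs)))"
    by (subst (1) f_eq) (simp add: right_diff_distrib sum_subtractf)
  also have "\<dots> \<in> os_ideal m"
    using fin supp mono_expansion_mem_os_ideal by (intro os_ideal.sum_mem) auto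
  finally show ?thesis .
qed

section \<open>The action of \<open>W\<close>\<close>

lemma matrix_inv_orthogonal:
  assumes "orthogonal_matrix w"
  shows "matrix_inv w = transpose w"
proof -
  have "w ** matrix_inv w = mat 1 \<and> matrix_inv w ** w = mat 1"
    unfolding matrix_inv_def
    by (rule someI_ex) (use assms orthogonal_matrix_def in blast)
  then have "transpose w ** (w ** matrix_inv w) = transpose w" by simp
  then show ?thesis using assms by (simp add: matrix_mul_assoc orthogonal_matrix_def)
qed

lemma act_eq:
  assumes "w \<in> dihedral m"
  shows "act w f = (\<lambda>ys. f (map (conj_mat w) ys))"
  using assms
  by (simp add: act_def matrix_inv_orthogonal orthogonal_matrix_dihedral conj_mat_def[abs_def])

lemma conj_mat_refls_iff:
  assumes "w \<in> dihedral m"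
  shows "conj_mat w t \<in> refls m \<longleftrightarrow> t \<in> refls m"
  using conj_mat_refls[OF dihedral_transpose[OF assms]] conj_mat_refls[OF assms]
    conj_mat_transpose_cancel[OF orthogonal_matrix_dihedral[OF assms]] by metis

lemma act_mono:
  assumes "w \<in> dihedral m"
  shows "act w (mono l) = mono (map (conj_mat (transpose w)) l)"
proof -
  have "map (conj_mat w) ys = l \<longleftrightarrow> ys = map (conj_mat (transpose w)) l" for ys
    using conj_mat_transpose_cancel[OF orthogonal_matrix_dihedral[OF assms]] by (auto simp: map_idI)
  then show ?thesis by (simp add: act_eq[OF assms] mono_def)
qed

lemma act_add: "act w (\<lambda>x. f x + h x) = (\<lambda>x. act w f x + act w h x)"
  and act_scale: "act w (\<lambda>x. c * f x) = (\<lambda>x. c * act w f x)"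
  and act_sum: "act w (\<lambda>x. \<Sum>j\<in>J. d j * F j x) = (\<lambda>x. \<Sum>j\<in>J. d j * act w (F j) x)"
  and act_tmul: "act w (tmul f g) = tmul (act w f) (act w g)"
  by (simp_all add: act_def tmul_def take_map drop_map)

lemma act_relator:
  assumes w: "w \<in> dihedral m" and r: "r \<in> relators m"
  shows "act w r \<in> relators m"
proof -
  let ?c = "conj_mat (transpose w)"
  have w': "transpose w \<in> dihedral m" using w by (rule dihedral_transpose)
  have inj: "?c a = ?c b \<longleftrightarrow> a = b" for a b
    using conj_mat_transpose_cancel[OF orthogonal_matrix_dihedral[OF w]] by metis
  consider (A) t t' where "r = anticomm_rel t t'" "t \<in> refls m" "t' \<in> refls m"
    | (B) ts where "r = boundary_rel ts" "set ts \<subseteq> refls m" "dependent_list ts"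
    using r unfolding relators_iff by blast
  then show ?thesis
  proof cases
    case A
    then have "act w r = anticomm_rel (?c t) (?c t')"
      by (simp add: anticomm_rel_def act_add act_mono[OF w] eta_contract_eq)
    then show ?thesis using A conj_mat_refls[OF w'] unfolding relators_iff by blast
  next
    case B
    have "act w r = boundary_rel (map ?c ts)"
      unfolding B(1) boundary_rel_def
      by (simp only: act_sum act_mono[OF w] map_append take_map drop_map length_map)
    moreover have s: "set (map ?c ts) \<subseteq> refls m" using B(2) conj_mat_refls[OF w'] by auto
    moreover have "dependent_list (map ?c ts)"
      using B(3) unfolding dependent_list_iff[OF B(2)] dependent_list_iff[OF s] by (auto simp: inj)
    ultimately show ?thesis unfolding relators_iff by blast
  qed
qed

lemma act_os_ideal:
  assumes w: "w \<in> dihedral m" and f: "f \<in> os_ideal m"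
  shows "act w f \<in> os_ideal m"
  using f
proof (induction rule: os_ideal.induct)
  case (gen r u v)
  let ?c = "conj_mat (transpose w)"
  have "set (map ?c u) \<subseteq> refls m" "set (map ?c v) \<subseteq> refls m"
    using gen conj_mat_refls[OF dihedral_transpose[OF w]] by auto
  then show ?case
    using act_relator[OF w gen(1)] by (simp add: act_tmul act_mono[OF w] os_ideal.gen)
qed (simp_all add: act_add act_def smult_def os_ideal.intros os_ideal.scale_mem)

lemma act_finite_support:
  assumes w: "w \<in> dihedral m" and fin: "finite {xs. f xs \<noteq> 0}"
  shows "finite {xs. act w f xs \<noteq> 0}"
proof -
  have "{xs. act w f xs \<noteq> 0} \<subseteq> map (conj_mat (transpose w)) ` {ys. f ys \<noteq> 0}"
    using conj_mat_transpose_cancel(2)[OF orthogonal_matrix_dihedral[OF w]]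
    by (auto simp: act_eq[OF w] image_iff map_idI intro!: exI[of _ "map (conj_mat w) _"])
  then show ?thesis using fin by (blast intro: finite_subset)
qed

lemma act_tensors:
  assumes w: "w \<in> dihedral m" and f: "f \<in> tensors m"
  shows "act w f \<in> tensors m"
proof -
  have "set xs \<subseteq> refls m" if "act w f xs \<noteq> 0" for xs
  proof -
    have "f (map (conj_mat w) xs) \<noteq> 0" using that by (simp add: act_eq[OF w])
    then have "set (map (conj_mat w) xs) \<subseteq> refls m" using f unfolding tensors_def by blast
    then show ?thesis using conj_mat_refls_iff[OF w] by auto
  qed
  moreover have "finite {xs. act w f xs \<noteq> 0}"
    using f by (intro act_finite_support[OF w]) (simp add: tensors_def)
  ultimately show ?thesis by (simp add: tensors_def)
qed

lemma act_tensors_deg: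
  assumes w: "w \<in> dihedral m" and f: "f \<in> tensors_deg m p"
  shows "act w f \<in> tensors_deg m p"
proof -
  have "length xs = p" if "act w f xs \<noteq> 0" for xs
  proof -
    have "f (map (conj_mat w) xs) \<noteq> 0" using that by (simp add: act_eq[OF w])
    then show ?thesis using f by (auto simp: tensors_deg_def)
  qed
  then show ?thesis using act_tensors[OF w] f by (simp add: tensors_deg_def)
qed

section \<open>Characters\<close>

lemma expansion_os_basis_deg_eq:
  assumes "f \<in> tensors_deg m p"
  shows "(\<Sum>a\<in>os_basis_deg m p. os_coord m a f * mono a zs)
    = (\<Sum>a\<in>os_basis m. os_coord m a f * mono a zs)"
proof -
  have "(\<Sum>a\<in>os_basis_deg m p. os_coord m a f * mono a zs)
      = (\<Sum>a\<in>os_basis m. if length a = p then os_coord m a f * mono a zs else 0)"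
    unfolding os_basis_deg_def using finite_os_basis by (rule sum.inter_filter)
  also have "\<dots> = (\<Sum>a\<in>os_basis m. os_coord m a f * mono a zs)"
    using assms os_basis_length os_coord_tensors_deg by (intro sum.cong) auto
  finally show ?thesis .
qed

lemma qtrace_tensors_deg:
  assumes w: "w \<in> dihedral m"
  shows "qtrace (tensors_deg m p) (os_ideal m \<inter> tensors_deg m p) (act w)
    = (\<Sum>a\<in>os_basis_deg m p. os_coord m a (act w (mono a)))"
proof -
  interpret tensors_deg: lin_closed "tensors_deg m p" by (rule lin_closed_tensors_deg)
  have basis: "mono a \<in> tensors_deg m p" if "a \<in> os_basis_deg m p" for a
    using that mono_mem_tensors_deg[OF os_basis_refls] by (auto simp: os_basis_deg_def)
  have "quotient_dual_system (os_ideal m \<inter> tensors_deg m p) (tensors_deg m p) mono (os_coord m)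
      (os_basis_deg m p)"
  proof (intro quotient_dual_system.intro quotient_dual_system_axioms.intro)
    show "lin_closed (os_ideal m \<inter> tensors_deg m p)"
      using lin_closed_Int os_ideal.lin_closed_axioms lin_closed_tensors_deg by blast
    show "finite (os_basis_deg m p)"
      using finite_os_basis by (simp add: os_basis_deg_def)
    fix f assume f: "f \<in> tensors_deg m p"
    have "(\<lambda>x. f x - (\<Sum>a\<in>os_basis_deg m p. os_coord m a f * mono a x)) \<in> os_ideal m"
      using expansion_mem_os_ideal tensors_deg_subset f
      by (simp add: expansion_os_basis_deg_eq[OF f]) blast
    moreover have "(\<lambda>x. f x - (\<Sum>a\<in>os_basis_deg m p. os_coord m a f * mono a x)) \<in> tensors_deg m p"
      using f basis finite_os_basis
      by (intro tensors_deg.diff_mem tensors_deg.sum_mem) (auto simp: os_basis_deg_def)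
    ultimately show "(\<lambda>x. f x - (\<Sum>a\<in>os_basis_deg m p. os_coord m a f * mono a x))
        \<in> os_ideal m \<inter> tensors_deg m p" by blast
  qed (use basis os_coord_os_ideal in \<open>auto simp: os_coord_add os_coord_scale os_basis_deg_def
      os_coord_mono_os_basis\<close>)
  then show ?thesis
    using act_os_ideal[OF w] act_tensors_deg[OF w]
    by (intro quotient_dual_system.qtrace_eq) (auto simp: act_add act_scale)
qed

lemma qtrace_tensors:
  assumes w: "w \<in> dihedral m"
  shows "qtrace (tensors m) (os_ideal m) (act w) = (\<Sum>a\<in>os_basis m. os_coord m a (act w (mono a)))"
proof -
  have "quotient_dual_system (os_ideal m) (tensors m) mono (os_coord m) (os_basis m)"
    by (intro quotient_dual_system.intro quotient_dual_system_axioms.intro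
        os_ideal.lin_closed_axioms finite_os_basis expansion_mem_os_ideal)
      (auto simp: os_coord_add os_coord_scale os_coord_os_ideal os_coord_mono_os_basis
        mono_mem_tensors os_basis_refls)
  then show ?thesis
    using act_os_ideal[OF w] act_tensors[OF w]
    by (intro quotient_dual_system.qtrace_eq) (auto simp: act_add act_scale)
qed

lemma sum_os_basis_deg:
  "(\<Sum>a\<in>os_basis_deg m p. F a) = (if p = 0 then F [] else 0)
     + (if p = 1 then \<Sum>t\<in>refls m. F [t] else 0)
     + (if p = 2 then \<Sum>t\<in>refls m - {sref}. F [sref, t] else 0)"
  unfolding os_basis_deg_def sum.inter_filter[OF finite_os_basis] sum_os_basis by simp

lemma sum_fixed_indicator:
  "(\<Sum>t\<in>refls m. if conj_mat w t = t then 1 else 0)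
    = (of_nat (card {t \<in> refls m. conj_mat w t = t}) :: complex)"
  using finite_refls by (simp add: sum.If_cases Int_def)

lemma sum_os_coord_act_deg_1:
  assumes w: "w \<in> dihedral m"
  shows "(\<Sum>t\<in>refls m. os_coord m [t] (act w (mono [t])))
    = of_nat (card {t \<in> refls m. conj_mat w t = t})"
  by (simp add: os_coord_def act_eq[OF w] mono_def sum_fixed_indicator)

lemma sum_os_coord_act_deg_2:
  assumes w: "w \<in> dihedral m"
  shows "(\<Sum>t\<in>refls m - {sref}. os_coord m [sref, t] (act w (mono [sref, t])))
    = of_nat (card {t \<in> refls m. conj_mat w t = t}) - 1"
proof -
  let ?c = "conj_mat (transpose w)"
  let ?ind = "\<lambda>P. if P then 1 else 0 :: complex"
  have fixed: "?c t = t \<longleftrightarrow> conj_mat w t = t" for t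
    using conj_mat_transpose_cancel[OF orthogonal_matrix_dihedral[OF w]] by metis
  have cs: "?c sref \<in> refls m" using conj_mat_refls[OF dihedral_transpose[OF w] sref_refls] .
  have "os_coord m [sref, t] (act w (mono [sref, t]))
      = ?ind (conj_mat w t = t) - ?ind (t = ?c sref)"
    if "t \<in> refls m" for t
    using that conj_mat_refls[OF dihedral_transpose[OF w]] cs
    by (auto simp: os_coord_def act_mono[OF w] boundary_coeff_mono_pair fixed)
  then have "(\<Sum>t\<in>refls m - {sref}. os_coord m [sref, t] (act w (mono [sref, t])))
      = (\<Sum>t\<in>refls m - {sref}. ?ind (conj_mat w t = t)) - (\<Sum>t\<in>refls m - {sref}. ?ind (t = ?c sref))"
    by (simp add: sum_subtractf)
  also have "(\<Sum>t\<in>refls m - {sref}. ?ind (t = ?c sref)) = 1 - ?ind (conj_mat w sref = sref)"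
    using cs finite_refls fixed[of sref] by (auto simp: sum.delta')
  also have "(\<Sum>t\<in>refls m - {sref}. ?ind (conj_mat w t = t))
      = of_nat (card {t \<in> refls m. conj_mat w t = t}) - ?ind (conj_mat w sref = sref)"
    using sum.remove[OF finite_refls sref_refls, of "\<lambda>t. ?ind (conj_mat w t = t)"]
    by (simp add: sum_fixed_indicator)
  finally show ?thesis by simp
qed

lemma os_coord_act_mono_Nil: "w \<in> dihedral m \<Longrightarrow> os_coord m [] (act w (mono [])) = 1"
  by (simp add: os_coord_def act_eq mono_def)

lemma oschar_deg_eq:
  assumes w: "w \<in> dihedral m"
  shows "oschar_deg m p w = (if p = 0 then 1 else 0) + (if p = 1 then permchar m w else 0)
    + (if p = 2 then permchar m w - 1 else 0)"
  by (simp add: oschar_deg_def qtrace_tensors_deg[OF w] sum_os_basis_deg os_coord_act_mono_Nil[OF w]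
      sum_os_coord_act_deg_1[OF w] sum_os_coord_act_deg_2[OF w] permchar_eq_card_fixed_refls[OF w])

lemma oschar_eq:
  assumes w: "w \<in> dihedral m"
  shows "oschar m w = 1 + permchar m w + (permchar m w - 1)"
  by (simp add: oschar_def qtrace_tensors[OF w] sum_os_basis os_coord_act_mono_Nil[OF w]
      sum_os_coord_act_deg_1[OF w] sum_os_coord_act_deg_2[OF w] permchar_eq_card_fixed_refls[OF w])

theorem proposition5p8:
  fixes m :: nat
  assumes "m \<ge> 2"
  shows "(\<forall>w\<in>dihedral m. oschar_deg m 1 w = permchar m w)
       \<and> (\<forall>w\<in>dihedral m. oschar_deg m 2 w = permchar m w - 1)
       \<and> (\<forall>w\<in>dihedral m. oschar m w = 2 * permchar m w)"
  using oschar_deg_eq[of _ m 1] oschar_deg_eq[of _ m 2] oschar_eq[of _ m] by simp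

end
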